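(* Let $T:\mathbb{Z}\to\mathbb{Z}$ be defined by $T(n)=n/2$ if $n$ is even and $T(n)=(3n+1)/2$ if $n$ is odd, and let $T_R:\mathbb{Z}\to\mathbb{Z}$ be defined by $$T_R(n)=\begin{cases}\dfrac{3n}{4}, & n\equiv 0\pmod 4,\\[2pt] \dfrac{n-2}{4}, & n\equiv 2\pmod 4,\\[2pt] \dfrac{3n+1}{2}, & n\equiv 1\pmod 2.\end{cases}$$ Then the following are equivalent: (a) for every positive integer $n$, some iterate $T^k(n)$ equals $1$ (the $3x+1$ conjecture); (b) for every integer $n\ge 0$, the $T_R$-trajectory of $n$ converges to $0$, i.e., $T_R^k(n)=0$ for some $k\ge 0$.
   Context: Iterates are defined by $f^0(n)=n$, $f^{k+1}(n)=f(f^k(n))$; the $f$-trajectory of $n$ is $(f^k(n))_{k\ge0}$. Note $0$ is a fixed point of $T_R$. *)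

theory Defs
  imports Main
begin

definition T :: "int \<Rightarrow> int" where
  "T n = (if even n then n div 2 else (3 * n + 1) div 2)"

definition T_R :: "int \<Rightarrow> int" where
  "T_R n = (if n mod 4 = 0 then (3 * n) div 4
            else if n mod 4 = 2 then (n - 2) div 4
            else (3 * n + 1) div 2)"

end

theory Submission
  imports Defs
begin

text \<open>
  Under \<open>n \<mapsto> 2n + 1\<close>, \<open>T\<^sub>R\<close> becomes an acceleration of \<open>T\<close> on odd
  numbers: the \<open>T\<close>-trajectories of \<open>2n + 1\<close> and \<open>2 T\<^sub>R(n) + 1\<close> merge after at
  most three steps of the former and strictly fewer of the latter, and for \<open>n \<noteq> 0\<close> the
  former does not pass through 1 before the merge. Since 1 lies on the cycle \<open>1 \<rightarrow> 2 \<rightarrow> 1\<close>,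
  reaching 1 depends only on the tail of a trajectory, so a \<open>T\<^sub>R\<close>-trajectory ending in 0
  yields a \<open>T\<close>-trajectory from \<open>2n + 1\<close> to 1. Conversely the hitting time of 1 strictly
  decreases along \<open>n \<mapsto> T\<^sub>R(n)\<close> while \<open>n \<noteq> 0\<close>, and \<open>T\<^sub>R\<close> preserves
  nonnegativity. Even positive numbers are halved down to odd ones.
\<close>

definition reaches :: "('a \<Rightarrow> 'a) \<Rightarrow> 'a \<Rightarrow> 'a \<Rightarrow> bool" where
  "reaches f x c \<longleftrightarrow> (\<exists>k. (f ^^ k) x = c)"

lemma reaches_refl: "reaches f c c"
  unfolding reaches_def by (metis funpow_0)

lemma reaches_step: "reaches f (f x) c \<Longrightarrow> reaches f x c"
  unfolding reaches_def by (metis funpow_Suc_right o_apply)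

lemma funpow_periodic_point:
  assumes "(f ^^ p) c = c"
  shows "(f ^^ (p * m)) c = c"
  using assms by (induction m) (simp_all add: funpow_add)

lemma reaches_funpow_iff:
  assumes "(f ^^ p) c = c" and "0 < p"
  shows "reaches f ((f ^^ i) x) c \<longleftrightarrow> reaches f x c"
proof
  assume "reaches f ((f ^^ i) x) c"
  then obtain k where "(f ^^ (k + i)) x = c"
    unfolding reaches_def by (auto simp: funpow_add)
  then show "reaches f x c"
    unfolding reaches_def by blast
next
  assume "reaches f x c"
  then obtain k where k: "(f ^^ k) x = c"
    unfolding reaches_def by blast
  have "i \<le> p * i + k"
    using \<open>0 < p\<close> by (metis One_nat_def Suc_leI mult_1 mult_le_mono1 trans_le_add1)
  then have "(f ^^ (p * i + k - i)) ((f ^^ i) x) = (f ^^ (p * i)) ((f ^^ k) x)"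
    by (metis funpow_add le_add_diff_inverse2 o_apply)
  also have "\<dots> = c"
    using k funpow_periodic_point[OF assms(1)] by simp
  finally show "reaches f ((f ^^ i) x) c"
    unfolding reaches_def by blast
qed

lemma funpow_merge_hits_earlier:
  fixes f :: "'a \<Rightarrow> 'a"
  assumes "(f ^^ k) x = c" and "\<forall>l < j. (f ^^ l) x \<noteq> c"
    and "(f ^^ j) x = (f ^^ i) y" and "i < j"
  shows "\<exists>k' < k. (f ^^ k') y = c"
proof -
  have "j \<le> k"
    using assms(1,2) not_le by blast
  have "(f ^^ (k - j + i)) y = (f ^^ (k - j)) ((f ^^ i) y)"
    by (simp add: funpow_add)
  also have "\<dots> = (f ^^ (k - j)) ((f ^^ j) x)"
    using assms(3) by simp
  also have "\<dots> = c"
    using \<open>j \<le> k\<close> assms(1) by (metis funpow_add le_add_diff_inverse2 o_apply)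
  finally show ?thesis
    using \<open>i < j\<close> \<open>j \<le> k\<close> by (intro exI[of _ "k - j + i"]) simp
qed

lemma T_R_nonneg: "0 \<le> n \<Longrightarrow> 0 \<le> T_R n"
  unfolding T_R_def by simp presburger

lemma T_R_odd: "T_R (2 * m + 1) = 3 * m + 2"
proof -
  have "(2 * m + 1) mod 4 \<noteq> 0" "(2 * m + 1) mod 4 \<noteq> 2"
    by presburger+
  then show ?thesis unfolding T_R_def by simp
qed
lemma T_odd_merge_T_R:
  fixes n :: int
  assumes "n \<noteq> 0"
  obtains i j where "i < j" and "(T ^^ j) (2 * n + 1) = (T ^^ i) (2 * T_R n + 1)"
    and "\<forall>l < j. (T ^^ l) (2 * n + 1) \<noteq> 1"
proof -
  consider m where "n = 2 * m + 1" | m where "n = 4 * m" | m where "n = 4 * m + 2"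
  proof -
    have "odd n \<or> n mod 4 = 0 \<or> n mod 4 = 2"
      by presburger
    moreover have "n = 4 * (n div 4) + n mod 4"
      by simp
    ultimately show ?thesis
      using that by (metis oddE add_0_right)
  qed
  then show ?thesis
  proof cases
    case (1 m)
    have "T (2 * n + 1) = 6 * m + 5"
      unfolding 1 T_def by simp
    then have "(T ^^ 1) (2 * n + 1) = (T ^^ 0) (2 * T_R n + 1)"
      unfolding 1 T_R_odd by simp
    moreover have "\<forall>l < 1. (T ^^ l) (2 * n + 1) \<noteq> 1"
      using assms by simp
    ultimately show ?thesis
      using that[of 0 1] by simp
  next
    case (2 m)
    have "T (2 * n + 1) = 12 * m + 2" "T (12 * m + 2) = 6 * m + 1" "T_R n = 3 * m"
      unfolding 2 T_def T_R_def by simp_all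
    then have "(T ^^ 2) (2 * n + 1) = (T ^^ 0) (2 * T_R n + 1)"
      by (simp add: numeral_2_eq_2)
    moreover have "\<forall>l < 2. (T ^^ l) (2 * n + 1) \<noteq> 1"
      using \<open>T (2 * n + 1) = 12 * m + 2\<close> 2 assms by (auto simp: numeral_2_eq_2 less_Suc_eq)
    ultimately show ?thesis
      using that[of 0 2] by simp
  next
    case (3 m)
    have "T (2 * n + 1) = 12 * m + 8" "T (12 * m + 8) = 6 * m + 4" "T (6 * m + 4) = 3 * m + 2"
      "T_R n = m" "T (2 * m + 1) = 3 * m + 2"
      unfolding 3 T_def T_R_def by simp_all
    then have "(T ^^ 3) (2 * n + 1) = (T ^^ 1) (2 * T_R n + 1)"
      by (simp add: numeral_3_eq_3)
    moreover have "\<forall>l < 3. (T ^^ l) (2 * n + 1) \<noteq> 1"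
      using \<open>T (2 * n + 1) = 12 * m + 8\<close> \<open>T (12 * m + 8) = 6 * m + 4\<close> 3
      by (auto simp: numeral_3_eq_3 less_Suc_eq; presburger)
    ultimately show ?thesis
      using that[of 1 3] by simp
  qed
qed

lemma reaches_one_iterate_iff: "reaches T ((T ^^ i) x) 1 \<longleftrightarrow> reaches T x 1"
  by (rule reaches_funpow_iff[where f = T and p = 2]) (simp_all add: T_def numeral_2_eq_2)

lemma reaches_one_odd_if_T_R_reaches_zero:
  "reaches T_R n 0 \<Longrightarrow> reaches T (2 * n + 1) 1"
proof -
  assume "reaches T_R n 0"
  then obtain k where "(T_R ^^ k) n = 0"
    unfolding reaches_def by blast
  then show ?thesis
  proof (induction k arbitrary: n)
    case 0
    then show ?case
      by (simp add: reaches_refl)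
  next
    case (Suc k)
    show ?case
    proof (cases "n = 0")
      case True
      then show ?thesis
        by (simp add: reaches_refl)
    next
      case False
      then obtain i j where merge: "(T ^^ j) (2 * n + 1) = (T ^^ i) (2 * T_R n + 1)"
        using T_odd_merge_T_R[OF False] by blast
      have "reaches T (2 * T_R n + 1) 1"
        using Suc by (simp add: funpow_Suc_right del: funpow.simps)
      then show ?thesis
        by (metis merge reaches_one_iterate_iff)
    qed
  qed
qed

lemma T_R_reaches_zero_if_odd_hits_one:
  "0 \<le> n \<Longrightarrow> (T ^^ k) (2 * n + 1) = 1 \<Longrightarrow> reaches T_R n 0"
proof (induction k arbitrary: n rule: less_induct)
  case (less k)
  show ?case
  proof (cases "n = 0")
    case True
    then show ?thesis
      by (simp add: reaches_refl)
  next
    case False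
    then obtain i j where "i < j" and "(T ^^ j) (2 * n + 1) = (T ^^ i) (2 * T_R n + 1)"
      and "\<forall>l < j. (T ^^ l) (2 * n + 1) \<noteq> 1"
      using T_odd_merge_T_R[OF False] by blast
    then obtain k' where "k' < k" and "(T ^^ k') (2 * T_R n + 1) = 1"
      using funpow_merge_hits_earlier[OF less.prems(2)] by blast
    then have "reaches T_R (T_R n) 0"
      using less.IH T_R_nonneg less.prems(1) by blast
    then show ?thesis
      by (rule reaches_step)
  qed
qed

lemma reaches_one_if_odd_reach_one:
  assumes "\<And>m. 0 \<le> m \<Longrightarrow> reaches T (2 * m + 1) 1" and "0 < n"
  shows "reaches T n 1"
  using \<open>0 < n\<close>
proof (induction "nat n" arbitrary: n rule: less_induct)
  case less
  show ?case
  proof (cases "even n")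
    case True
    then have "T n = n div 2" and "nat (n div 2) < nat n" and "0 < n div 2"
      using less.prems by (auto simp: T_def)
    then show ?thesis
      using less.hyps reaches_step by metis
  next
    case False
    then obtain m where "n = 2 * m + 1"
      by (rule oddE)
    then show ?thesis
      using assms(1) less.prems by simp
  qed
qed

theorem theorem1:
  shows "(\<forall>n::int. n > 0 \<longrightarrow> (\<exists>k::nat. (T ^^ k) n = 1))
     \<longleftrightarrow> (\<forall>n::int. n \<ge> 0 \<longrightarrow> (\<exists>k::nat. (T_R ^^ k) n = 0))"
proof
  assume "\<forall>n::int. n > 0 \<longrightarrow> (\<exists>k::nat. (T ^^ k) n = 1)"
  then have "reaches T_R n 0" if "0 \<le> n" for n
    using that T_R_reaches_zero_if_odd_hits_one[of n] by fastforce
  then show "\<forall>n::int. n \<ge> 0 \<longrightarrow> (\<exists>k::nat. (T_R ^^ k) n = 0)"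
    unfolding reaches_def by blast
next
  assume "\<forall>n::int. n \<ge> 0 \<longrightarrow> (\<exists>k::nat. (T_R ^^ k) n = 0)"
  then have "reaches T (2 * m + 1) 1" if "0 \<le> m" for m
    using that reaches_one_odd_if_T_R_reaches_zero unfolding reaches_def by blast
  then show "\<forall>n::int. n > 0 \<longrightarrow> (\<exists>k::nat. (T ^^ k) n = 1)"
    using reaches_one_if_odd_reach_one unfolding reaches_def by blast
qed

end
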